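(* For all $m,t\in\mathbb{N}$, $R_t(0,m) = 2^m-\lceil 2^{m-t}\rceil$.
   Context: For a $t\times n$ matrix $\mathbf{v}$ over $\mathbb{F}_2$ with rows $\overline{v}_1,\dots,\overline{v}_t$, $\mathrm{wt}^{(t)}(\mathbf{v})=\left|\bigcup_{i} \mathrm{supp}(\overline{v}_i)\right|$ and $d^{(t)}(\mathbf{u},\mathbf{v})=\mathrm{wt}^{(t)}(\mathbf{u}-\mathbf{v})$. For a linear code $C\subseteq\mathbb{F}_2^n$, $C^t$ is the set of $t\times n$ matrices all of whose rows lie in $C$, and the $t$-th generalized covering radius $R_t(C)$ is the smallest integer $\rho$ such that for every $\mathbf{v}\in\mathbb{F}_2^{t\times n}$ some $\mathbf{c}\in C^t$ has $d^{(t)}(\mathbf{v},\mathbf{c})\le\rho$. $\mathrm{RM}(0,m)=\{\overline{0},\overline{1}\}\subseteq\mathbb{F}_2^{2^m}$ is the binary repetition code of length $2^m$, and $R_t(0,m)=R_t(\mathrm{RM}(0,m))$. *)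

theory Defs
  imports Complex_Main
begin

text \<open>F_2 is modelled by bool (addition / subtraction = exclusive or).
A vector of F_2^n is a function nat => bool vanishing outside {0..<n};
a t x n matrix is a function nat => nat => bool (row index, column index)
vanishing outside {0..<t} x {0..<n}.\<close>

definition words :: "nat \<Rightarrow> (nat \<Rightarrow> bool) set" where
  "words n = {x. \<forall>j. n \<le> j \<longrightarrow> \<not> x j}"

definition matrices :: "nat \<Rightarrow> nat \<Rightarrow> (nat \<Rightarrow> nat \<Rightarrow> bool) set" where
  "matrices t n = {v. \<forall>i j. (t \<le> i \<or> n \<le> j) \<longrightarrow> \<not> v i j}"

definition linear_code :: "nat \<Rightarrow> (nat \<Rightarrow> bool) set \<Rightarrow> bool" where
  "linear_code n C \<longleftrightarrow> C \<subseteq> words n \<and> (\<lambda>j. False) \<in> C \<and>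
     (\<forall>x\<in>C. \<forall>y\<in>C. (\<lambda>j. x j \<noteq> y j) \<in> C)"

definition gwt :: "nat \<Rightarrow> nat \<Rightarrow> (nat \<Rightarrow> nat \<Rightarrow> bool) \<Rightarrow> nat" where
  "gwt t n v = card {j \<in> {..<n}. \<exists>i<t. v i j}"

definition gdist :: "nat \<Rightarrow> nat \<Rightarrow> (nat \<Rightarrow> nat \<Rightarrow> bool) \<Rightarrow> (nat \<Rightarrow> nat \<Rightarrow> bool) \<Rightarrow> nat" where
  "gdist t n u v = gwt t n (\<lambda>i j. u i j \<noteq> v i j)"

definition code_pow :: "nat \<Rightarrow> nat \<Rightarrow> (nat \<Rightarrow> bool) set \<Rightarrow> (nat \<Rightarrow> nat \<Rightarrow> bool) set" where
  "code_pow t n C = {c \<in> matrices t n. \<forall>i<t. c i \<in> C}"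

definition gen_cov_radius :: "nat \<Rightarrow> nat \<Rightarrow> (nat \<Rightarrow> bool) set \<Rightarrow> nat" where
  "gen_cov_radius t n C =
     (LEAST \<rho>. \<forall>v\<in>matrices t n. \<exists>c\<in>code_pow t n C. gdist t n v c \<le> \<rho>)"

definition RM0 :: "nat \<Rightarrow> (nat \<Rightarrow> bool) set" where
  "RM0 m = {(\<lambda>j. False), (\<lambda>j. j < 2 ^ m)}"

definition R0 :: "nat \<Rightarrow> nat \<Rightarrow> nat" where
  "R0 t m = gen_cov_radius t (2 ^ m) (RM0 m)"

end

theory Submission
  imports Defs "HOL-Library.FuncSet"
begin

text \<open>A matrix \<open>c\<close> with rows in the repetition code of length \<open>n\<close> is determined by the
set \<open>S\<close> of its all-ones rows, and \<open>c\<close> agrees with \<open>v\<close> exactly in the columns of \<open>v\<close>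
whose support is \<open>S\<close>; so the distance from \<open>v\<close> to \<open>c\<close> is \<open>n\<close> minus the number of such
columns. By pigeonhole over the \<open>2\<^sup>t\<close> possible column supports, some \<open>S\<close> is the support
of at least \<open>\<lceil>n / 2\<^sup>t\<rceil>\<close> columns. Conversely, if the \<open>j\<close>-th column of \<open>v\<close> is the binary
expansion of \<open>j mod 2\<^sup>t\<close>, no support occurs more than \<open>\<lceil>n / 2\<^sup>t\<rceil>\<close> times. Hence
\<open>R\<^sub>t = n - \<lceil>n / 2\<^sup>t\<rceil>\<close>, and \<open>n = 2\<^sup>m\<close> gives the claim.\<close>

definition repetition_code :: "nat \<Rightarrow> (nat \<Rightarrow> bool) set" where
  "repetition_code n = {(\<lambda>j. False), (\<lambda>j. j < n)}"

lemma RM0_eq_repetition_code: "RM0 m = repetition_code (2 ^ m)"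
  by (simp add: RM0_def repetition_code_def)

definition column_support :: "nat \<Rightarrow> (nat \<Rightarrow> nat \<Rightarrow> bool) \<Rightarrow> nat \<Rightarrow> nat set" where
  "column_support t v j = {i. i < t \<and> v i j}"

definition ones_rows :: "nat \<Rightarrow> nat set \<Rightarrow> nat \<Rightarrow> nat \<Rightarrow> bool" where
  "ones_rows n S = (\<lambda>i j. i \<in> S \<and> j < n)"

lemma code_pow_repetition_code:
  "code_pow t n (repetition_code n) = ones_rows n ` Pow {..<t}"
proof
  show "ones_rows n ` Pow {..<t} \<subseteq> code_pow t n (repetition_code n)"
    by (auto simp: code_pow_def matrices_def ones_rows_def repetition_code_def)
next
  show "code_pow t n (repetition_code n) \<subseteq> ones_rows n ` Pow {..<t}"
  proof
    fix c assume c: "c \<in> code_pow t n (repetition_code n)"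
    define S where "S = {i. i < t \<and> c i = (\<lambda>j. j < n)}"
    have "c i j = ones_rows n S i j" for i j
    proof (cases "i < t")
      case True
      then have "c i = (\<lambda>j. False) \<or> c i = (\<lambda>j. j < n)"
        using c by (auto simp: code_pow_def repetition_code_def)
      then show ?thesis using True by (auto simp: ones_rows_def S_def fun_eq_iff)
    next
      case False
      then show ?thesis using c by (auto simp: code_pow_def matrices_def ones_rows_def S_def)
    qed
    then have "c = ones_rows n S" by blast
    moreover have "S \<in> Pow {..<t}" by (auto simp: S_def)
    ultimately show "c \<in> ones_rows n ` Pow {..<t}" by blast
  qed
qed

lemma gdist_ones_rows:
  assumes "S \<subseteq> {..<t}"
  shows "gdist t n v (ones_rows n S) = n - card {j \<in> {..<n}. column_support t v j = S}"
proof -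
  have "{j \<in> {..<n}. \<exists>i<t. v i j \<noteq> ones_rows n S i j}
      = {..<n} - {j \<in> {..<n}. column_support t v j = S}"
    using assms by (auto simp: ones_rows_def column_support_def)
  also have "card \<dots> = n - card {j \<in> {..<n}. column_support t v j = S}"
    by (subst card_Diff_subset) auto
  finally show ?thesis
    by (simp add: gdist_def gwt_def)
qed

lemma card_residue_class_le:
  fixes n T k :: nat
  assumes "n \<le> T * k"
  shows "card {j \<in> {..<n}. j mod T = r} \<le> k"
proof -
  have "{j \<in> {..<n}. j mod T = r} \<subseteq> (\<lambda>q. q * T + r) ` {..<k}"
  proof
    fix j assume j: "j \<in> {j \<in> {..<n}. j mod T = r}"
    then have "j div T < k"
      using assms by (cases "T = 0") (auto simp: div_less_iff_less_mult mult.commute)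
    moreover have "j = j div T * T + r" using j by auto
    ultimately show "j \<in> (\<lambda>q. q * T + r) ` {..<k}" by blast
  qed
  then have "card {j \<in> {..<n}. j mod T = r} \<le> card ((\<lambda>q. q * T + r) ` {..<k})"
    by (intro card_mono) auto
  also have "\<dots> \<le> k" using card_image_le[of "{..<k}"] by simp
  finally show ?thesis .
qed

lemma ceiling_divide_le_iff:
  fixes n T k :: nat
  assumes "0 < T"
  shows "nat \<lceil>real n / real T\<rceil> \<le> k \<longleftrightarrow> n \<le> T * k"
proof -
  have "nat \<lceil>real n / real T\<rceil> \<le> k \<longleftrightarrow> real n / real T \<le> real k"
    by (simp add: nat_le_iff ceiling_le_iff)
  also have "\<dots> \<longleftrightarrow> n \<le> T * k"
    using assms by (simp add: pos_divide_le_eq mult.commute flip: of_nat_mult)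
  finally show ?thesis .
qed

lemma repetition_code_covers:
  "\<exists>c \<in> code_pow t n (repetition_code n). gdist t n v c \<le> n - nat \<lceil>real n / 2 ^ t\<rceil>"
proof -
  have "column_support t v \<in> {..<n} \<rightarrow> Pow {..<t}"
    by (auto simp: column_support_def)
  then obtain S where S: "S \<in> Pow {..<t}"
    and "card (column_support t v -` {S} \<inter> {..<n}) * card (Pow {..<t}) \<ge> card {..<n}"
    using pigeonhole_card[of "column_support t v" "{..<n}" "Pow {..<t}"] by auto
  then have "n \<le> 2 ^ t * card {j \<in> {..<n}. column_support t v j = S}"
    by (simp add: card_Pow vimage_def Int_def conj_commute mult.commute)
  then have "nat \<lceil>real n / 2 ^ t\<rceil> \<le> card {j \<in> {..<n}. column_support t v j = S}"
    using ceiling_divide_le_iff[of "2 ^ t"] by simp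
  then have "gdist t n v (ones_rows n S) \<le> n - nat \<lceil>real n / 2 ^ t\<rceil>"
    using S by (simp add: gdist_ones_rows diff_le_mono2)
  then show ?thesis
    using S by (auto simp: code_pow_repetition_code)
qed

definition binary_matrix :: "nat \<Rightarrow> nat \<Rightarrow> nat \<Rightarrow> nat \<Rightarrow> bool" where
  "binary_matrix t n = (\<lambda>i j. i < t \<and> j < n \<and> bit j i)"

lemma binary_matrix_in_matrices: "binary_matrix t n \<in> matrices t n"
  by (auto simp: binary_matrix_def matrices_def)

lemma column_support_binary_matrix_eq_imp_mod_eq:
  assumes "j < n" "j' < n"
    and "column_support t (binary_matrix t n) j = column_support t (binary_matrix t n) j'"
  shows "j mod 2 ^ t = j' mod 2 ^ t"
proof -
  have "bit j i = bit j' i" if "i < t" for i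
    using assms that by (auto simp: column_support_def binary_matrix_def set_eq_iff)
  then have "take_bit t j = take_bit t j'"
    by (intro bit_eqI) (auto simp: bit_take_bit_iff)
  then show ?thesis by (simp add: take_bit_eq_mod)
qed

lemma binary_matrix_far_from_repetition_code:
  assumes "c \<in> code_pow t n (repetition_code n)"
  shows "n - nat \<lceil>real n / 2 ^ t\<rceil> \<le> gdist t n (binary_matrix t n) c"
proof -
  from assms obtain S where S: "S \<subseteq> {..<t}" and c: "c = ones_rows n S"
    by (auto simp: code_pow_repetition_code)
  define A where "A = {j \<in> {..<n}. column_support t (binary_matrix t n) j = S}"
  have "card A \<le> nat \<lceil>real n / 2 ^ t\<rceil>"
  proof (cases "A = {}")
    case False
    then obtain j0 where j0: "j0 \<in> A" by blast
    have "A \<subseteq> {j \<in> {..<n}. j mod 2 ^ t = j0 mod 2 ^ t}"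
      using j0 column_support_binary_matrix_eq_imp_mod_eq by (auto simp: A_def)
    then have "card A \<le> card {j \<in> {..<n}. j mod 2 ^ t = j0 mod 2 ^ t}"
      by (intro card_mono) auto
    also have "\<dots> \<le> nat \<lceil>real n / 2 ^ t\<rceil>"
      using ceiling_divide_le_iff[of "2 ^ t" n "nat \<lceil>real n / 2 ^ t\<rceil>"]
      by (intro card_residue_class_le) simp
    finally show ?thesis .
  qed simp
  then show ?thesis
    by (simp add: c gdist_ones_rows[OF S] A_def)
qed

theorem gen_cov_radius_repetition_code:
  "gen_cov_radius t n (repetition_code n) = n - nat \<lceil>real n / 2 ^ t\<rceil>"
  unfolding gen_cov_radius_def
proof (rule Least_equality)
  show "\<forall>v\<in>matrices t n. \<exists>c\<in>code_pow t n (repetition_code n).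
          gdist t n v c \<le> n - nat \<lceil>real n / 2 ^ t\<rceil>"
    using repetition_code_covers by blast
next
  fix \<rho> assume "\<forall>v\<in>matrices t n. \<exists>c\<in>code_pow t n (repetition_code n). gdist t n v c \<le> \<rho>"
  then obtain c where "c \<in> code_pow t n (repetition_code n)" "gdist t n (binary_matrix t n) c \<le> \<rho>"
    using binary_matrix_in_matrices by blast
  then show "n - nat \<lceil>real n / 2 ^ t\<rceil> \<le> \<rho>"
    using binary_matrix_far_from_repetition_code by fastforce
qed

theorem proposition9:
  fixes m t :: nat
  shows "int (R0 t m) = 2 ^ m - \<lceil>(2::real) powr (real m - real t)\<rceil>"
proof -
  have powr_eq: "(2::real) powr (real m - real t) = real (2 ^ m) / 2 ^ t"
    by (simp add: powr_diff powr_realpow)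
  have "nat \<lceil>real (2 ^ m) / 2 ^ t\<rceil> \<le> 2 ^ m"
    using ceiling_divide_le_iff[of "2 ^ t" "2 ^ m" "2 ^ m"] by simp
  moreover have "0 \<le> \<lceil>real (2 ^ m) / (2::real) ^ t\<rceil>"
    using ceiling_mono[of 0 "real (2 ^ m) / 2 ^ t"] by simp
  ultimately show ?thesis
    by (simp add: R0_def RM0_eq_repetition_code gen_cov_radius_repetition_code powr_eq of_nat_diff)
qed

end
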